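(* Let $f,a_1,d_1,d_2\in\mathbb{C}$ with $\mathrm{Re}(f-a_1-d_1-d_2-1)>0$, such that the series below is well defined (no lower parameter is a nonpositive integer), $a_1\ne0$, and the quantities below are defined and $k$ is not a nonpositive integer. Put $$h=\frac{(\frac f2+\frac12)(\frac f2-\frac32)}{a_1},\qquad k=\frac{h(1+d_1+a_1-f)(1+d_2+a_1-f)}{d_1d_2-h(1+d_1+d_2+a_1-f)}.$$ Then $$ {}_{5}F_{4}\left[\begin{matrix} f-1,\ \frac f2+\frac32,\ a_1,\ d_1,\ d_2\\ \frac f2-\frac32,\ f-a_1,\ f-d_1,\ f-d_2\end{matrix};1\right]=\frac{\Gamma(f-d_1)\Gamma(f-d_2)\Gamma(f-a_1)\Gamma(f-a_1-d_1-d_2-1)}{\Gamma(f)\Gamma(f-d_1-d_2)\Gamma(f-a_1-d_1-1)\Gamma(f-a_1-d_2-1)}\cdot\frac{\Gamma(k)}{\Gamma(k+1)}.$$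
   Context: $(x)_n$ denotes the Pochhammer symbol: $(x)_0=1$, $(x)_n=x(x+1)\cdots(x+n-1)$ for $n\ge1$. The generalized hypergeometric function is $${}_{r+1}F_{r}\left[\begin{matrix} a_1,\dots,a_{r+1}\\ b_1,\dots,b_r\end{matrix};z\right]=\sum_{n=0}^{\infty}\frac{(a_1)_n\cdots(a_{r+1})_n}{(b_1)_n\cdots(b_r)_n\,n!}z^n ,$$ where no $b_i$ is a nonpositive integer. $\Gamma$ is Euler's gamma function. *)

theory Defs
  imports "HOL-Analysis.Analysis"
begin

definition hypergeom :: "complex list \<Rightarrow> complex list \<Rightarrow> complex \<Rightarrow> complex" where
  "hypergeom as bs z =
     (\<Sum>n. (\<Prod>a\<leftarrow>as. pochhammer a n) / (\<Prod>b\<leftarrow>bs. pochhammer b n) * z ^ n / of_nat (fact n))"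

end

theory Submission
  imports Defs
begin

(* With A = f - 1 the series is very-well-poised, and the extra pair f/2 + 3/2 over f/2 - 3/2,
   i.e. A/2 + 2 over A/2 - 1, splits its term into the term of Dougall's very-well-poised 5F4 sum
   plus 4/(A^2 - 4) times that term weighted by n (n + A).  After the index shift n -> n + 1 the
   weighted series is again a Dougall series, with parameters A + 2, b + 1, c + 1, d + 1, so both
   parts are quotients of Gamma values, and the stated k is exactly what remains.

   Dougall's sum itself is proved by a Wilf-Zeilberger recurrence in A: the telescoping
   certificate shows that the sum S(A) satisfies the same first order recurrence as the Gamma
   quotient, so S(A + m) is S(A) times a quotient of Pochhammer symbols which tends to the
   reciprocal of the Gamma quotient.  On the other hand S(A + m) tends to 1, by a bound on the
   tails that is uniform in m. *)


section \<open>Pochhammer quotients\<close>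

lemma add_of_nat_notin_nonpos_Ints:
  fixes z :: "'a :: ring_char_0"
  assumes "z \<notin> \<int>\<^sub>\<le>\<^sub>0"
  shows "z + of_nat n \<notin> \<int>\<^sub>\<le>\<^sub>0"
  using nonpos_Ints_diff_Nats[of "z + of_nat n" "of_nat n"] assms by auto

lemma add_of_nat_neq_0_of_notin_nonpos_Ints:
  fixes z :: "'a :: ring_char_0"
  assumes "z \<notin> \<int>\<^sub>\<le>\<^sub>0"
  shows "z + of_nat n \<noteq> 0"
  using add_of_nat_notin_nonpos_Ints[OF assms, of n] by auto

lemma pochhammer_neq_0_of_notin_nonpos_Ints:
  fixes z :: "'a :: field_char_0"
  shows "z \<notin> \<int>\<^sub>\<le>\<^sub>0 \<Longrightarrow> pochhammer z n \<noteq> 0"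
  by (auto simp: pochhammer_eq_0_iff)

lemma notin_nonpos_Ints_of_Re_pos: "Re z > 0 \<Longrightarrow> z \<notin> \<int>\<^sub>\<le>\<^sub>0"
  by (auto elim!: nonpos_Ints_cases')

lemma pochhammer_plus_one:
  "(z::'a::field) \<noteq> 0 \<Longrightarrow> pochhammer (z + 1) n = pochhammer z n * (z + of_nat n) / z"
  using pochhammer_rec[of z n] pochhammer_Suc[of z n] by (simp add: field_simps)

lemma pochhammer_Suc_Suc_shift:
  "pochhammer z (Suc k) * (z + of_nat (Suc k)) = z * (z + 1) * pochhammer (z + 2) k"
proof -
  have "pochhammer z (Suc k) * (z + of_nat (Suc k)) = pochhammer z (Suc (Suc k))"
    by (simp only: pochhammer_Suc)
  also have "\<dots> = z * ((z + 1) * pochhammer (z + 1 + 1) k)"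
    by (simp only: pochhammer_rec)
  finally show ?thesis by (simp add: add.assoc mult.assoc)
qed

lemma pochhammer_add_3:
  "pochhammer (x + 3) n * (x * (x + 1) * (x + 2)) =
     pochhammer x n * ((x + of_nat n) * (x + of_nat n + 1) * (x + of_nat n + 2))"
  for x :: "'a::comm_semiring_1"
proof -
  have cube: "pochhammer y 3 = y * (y + 1) * (y + 2)" for y :: 'a
    by (simp add: pochhammer_Suc numeral_3_eq_3 algebra_simps)
  have "pochhammer x 3 * pochhammer (x + 3) n = pochhammer x n * pochhammer (x + of_nat n) 3"
    using pochhammer_product'[of x 3 n] pochhammer_product'[of x n 3] by (simp add: add.commute)
  then show ?thesis
    unfolding cube by (simp add: mult.commute)
qed

lemma pochhammer_divide_asymptotics:
  fixes x y :: complex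
  assumes "x \<notin> \<int>\<^sub>\<le>\<^sub>0" "y \<notin> \<int>\<^sub>\<le>\<^sub>0"
  shows "(\<lambda>n. pochhammer x n / pochhammer y n * exp ((y - x) * of_real (ln (of_nat n))))
           \<longlonglongrightarrow> Gamma y / Gamma x"
proof -
  have "pochhammer x n / pochhammer y n * exp ((y - x) * of_real (ln (of_nat n))) =
        Gamma_series' y n / Gamma_series' x n" for n
    using assms[THEN pochhammer_neq_0_of_notin_nonpos_Ints, of n]
    by (simp add: Gamma_series'_def exp_diff left_diff_distrib field_simps)
  moreover have "(\<lambda>n. Gamma_series' y n / Gamma_series' x n) \<longlonglongrightarrow> Gamma y / Gamma x"
    using assms by (intro tendsto_intros Gamma_series'_LIMSEQ) (simp add: Gamma_eq_zero_iff)
  ultimately show ?thesis by simp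
qed

definition pochhammer_quot :: "(complex \<times> complex) list \<Rightarrow> nat \<Rightarrow> complex" where
  "pochhammer_quot ps n = (\<Prod>p\<leftarrow>ps. pochhammer (fst p) n / pochhammer (snd p) n)"

definition pochhammer_quot_excess :: "(complex \<times> complex) list \<Rightarrow> complex" where
  "pochhammer_quot_excess ps = (\<Sum>p\<leftarrow>ps. snd p - fst p)"

lemma pochhammer_quot_0 [simp]: "pochhammer_quot ps 0 = 1"
  by (induction ps) (simp_all add: pochhammer_quot_def)

lemma pochhammer_quot_Suc:
  "pochhammer_quot ps (Suc n) = pochhammer_quot ps n * (\<Prod>p\<leftarrow>ps. (fst p + of_nat n) / (snd p + of_nat n))"
  by (induction ps) (simp_all add: pochhammer_quot_def pochhammer_Suc times_divide_times_eq mult_ac)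

lemma pochhammer_quot_Cons_scaled:
  "pochhammer_quot (p # ps) n * exp (pochhammer_quot_excess (p # ps) * l) =
     (pochhammer (fst p) n / pochhammer (snd p) n * exp ((snd p - fst p) * l)) *
     (pochhammer_quot ps n * exp (pochhammer_quot_excess ps * l))"
  by (simp add: pochhammer_quot_def pochhammer_quot_excess_def distrib_right exp_add)

lemma pochhammer_quot_asymptotics:
  assumes "\<forall>p\<in>set ps. fst p \<notin> \<int>\<^sub>\<le>\<^sub>0 \<and> snd p \<notin> \<int>\<^sub>\<le>\<^sub>0"
  shows "(\<lambda>n. pochhammer_quot ps n * exp (pochhammer_quot_excess ps * of_real (ln (of_nat n))))
           \<longlonglongrightarrow> (\<Prod>p\<leftarrow>ps. Gamma (snd p) / Gamma (fst p))"
  using assms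
proof (induction ps)
  case Nil
  then show ?case by (simp add: pochhammer_quot_def pochhammer_quot_excess_def)
next
  case (Cons p ps)
  then show ?case
    unfolding pochhammer_quot_Cons_scaled prod_list.Cons list.map
    by (intro tendsto_mult pochhammer_divide_asymptotics) auto
qed

text \<open>A numerator parameter that is a nonpositive integer makes the quotient eventually zero,
  so only the denominators need to avoid the poles.\<close>
lemma convergent_pochhammer_quot_scaled:
  assumes "\<forall>p\<in>set ps. snd p \<notin> \<int>\<^sub>\<le>\<^sub>0"
  shows "convergent (\<lambda>n. pochhammer_quot ps n *
           exp (pochhammer_quot_excess ps * of_real (ln (of_nat n))))"
  using assms
proof (induction ps)
  case Nil
  then show ?case by (simp add: pochhammer_quot_def pochhammer_quot_excess_def convergent_const)
next
  case (Cons p ps)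
  have head: "convergent (\<lambda>n. pochhammer (fst p) n / pochhammer (snd p) n *
      exp ((snd p - fst p) * of_real (ln (of_nat n))))" (is "convergent ?q")
  proof (cases "fst p \<in> \<int>\<^sub>\<le>\<^sub>0")
    case True
    then obtain k where k: "fst p = - of_nat k" by (auto elim!: nonpos_Ints_cases')
    have "eventually (\<lambda>n. ?q n = 0) sequentially"
      using eventually_gt_at_top[of k]
      by eventually_elim (simp add: k pochhammer_of_nat_eq_0_lemma del: of_nat_Suc)
    then show ?thesis unfolding convergent_def by (blast intro: tendsto_eventually)
  next
    case False
    then show ?thesis using Cons.prems pochhammer_divide_asymptotics by (auto simp: convergent_def)
  qed
  show ?case
    unfolding pochhammer_quot_Cons_scaled using Cons by (intro convergent_mult[OF head]) simp
qed

lemma pochhammer_quot_bound: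
  assumes "\<forall>p\<in>set ps. snd p \<notin> \<int>\<^sub>\<le>\<^sub>0"
  obtains C where "C > 0"
    "\<And>n. n \<ge> 1 \<Longrightarrow>
       norm (pochhammer_quot ps n) \<le> C * real n powr (- Re (pochhammer_quot_excess ps))"
proof -
  define E where "E = pochhammer_quot_excess ps"
  have "Bseq (\<lambda>n. pochhammer_quot ps n * exp (E * of_real (ln (of_nat n))))"
    unfolding E_def by (rule convergent_imp_Bseq[OF convergent_pochhammer_quot_scaled[OF assms]])
  then obtain C where C: "C > 0" "\<And>n. norm (pochhammer_quot ps n * exp (E * of_real (ln (of_nat n)))) \<le> C"
    by (auto simp: Bseq_def)
  show ?thesis
  proof (rule that[OF C(1)])
    fix n :: nat assume n: "n \<ge> 1"
    have "norm (pochhammer_quot ps n) * exp (Re E * ln (real n)) \<le> C"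
      using C(2)[of n] by (simp add: norm_mult)
    hence "norm (pochhammer_quot ps n) \<le> C / exp (Re E * ln (real n))"
      by (simp add: field_simps)
    also have "\<dots> = C * real n powr (- Re E)"
      using n by (simp add: powr_def exp_minus field_simps)
    finally show "norm (pochhammer_quot ps n) \<le> C * real n powr (- Re (pochhammer_quot_excess ps))"
      unfolding E_def .
  qed
qed

lemma summable_pochhammer_quot_linear:
  assumes "\<forall>p\<in>set ps. snd p \<notin> \<int>\<^sub>\<le>\<^sub>0" and "Re (pochhammer_quot_excess ps) > 2"
  shows "summable (\<lambda>n. norm (pochhammer_quot ps n) * (1 + 2 * real n))"
proof -
  define E where "E = Re (pochhammer_quot_excess ps)"
  obtain C where C: "C > 0" "\<And>n. n \<ge> 1 \<Longrightarrow> norm (pochhammer_quot ps n) \<le> C * real n powr (- E)"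
    using pochhammer_quot_bound[OF assms(1)] unfolding E_def by blast
  have "summable (\<lambda>n. 3 * C * real n powr (1 - E))"
    using assms(2) unfolding E_def by (intro summable_mult) (simp add: summable_real_powr_iff)
  moreover have "eventually (\<lambda>n. norm (norm (pochhammer_quot ps n) * (1 + 2 * real n))
      \<le> 3 * C * real n powr (1 - E)) sequentially"
    using eventually_ge_at_top[of "1::nat"]
  proof eventually_elim
    case (elim n)
    have n: "real n \<ge> 1" using elim by simp
    have "norm (norm (pochhammer_quot ps n) * (1 + 2 * real n)) \<le> C * real n powr (- E) * (3 * real n)"
      using C(1) n by (auto intro!: mult_mono C(2)[OF elim])
    also have "\<dots> = 3 * C * (real n powr (- E) * real n powr 1)"
      using n by simp
    also have "\<dots> = 3 * C * real n powr (1 - E)"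
      by (simp only: powr_add[symmetric]) (simp add: algebra_simps)
    finally show ?case .
  qed
  ultimately show ?thesis by (rule summable_comparison_test_ev[rotated])
qed

lemma pochhammer_quot_quadratic_tendsto_0:
  assumes "\<forall>p\<in>set ps. snd p \<notin> \<int>\<^sub>\<le>\<^sub>0" and "Re (pochhammer_quot_excess ps) > 2"
  shows "(\<lambda>n. pochhammer_quot ps n * (of_nat n * (of_nat n + w))) \<longlonglongrightarrow> 0"
proof -
  define E where "E = Re (pochhammer_quot_excess ps)"
  obtain C where C: "C > 0" "\<And>n. n \<ge> 1 \<Longrightarrow> norm (pochhammer_quot ps n) \<le> C * real n powr (- E)"
    using pochhammer_quot_bound[OF assms(1)] unfolding E_def by blast
  have lim: "(\<lambda>n. C * (1 + norm w) * real n powr (2 - E)) \<longlonglongrightarrow> C * (1 + norm w) * 0"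
    using assms(2) unfolding E_def
    by (intro tendsto_mult tendsto_const tendsto_neg_powr[OF _ filterlim_real_sequentially]) simp
  have "eventually (\<lambda>n. norm (pochhammer_quot ps n * (of_nat n * (of_nat n + w)))
          \<le> C * (1 + norm w) * real n powr (2 - E)) sequentially"
    using eventually_ge_at_top[of "1::nat"]
  proof eventually_elim
    case (elim n)
    have n: "real n \<ge> 1" using elim by simp
    have "norm (of_nat n + w) \<le> real n + norm w"
      using norm_triangle_ineq[of "of_nat n" w] by simp
    also have "\<dots> \<le> (1 + norm w) * real n"
      using n mult_left_mono[of 1 "real n" "norm w"] by (simp add: distrib_right)
    finally have nw: "norm (of_nat n + w) \<le> (1 + norm w) * real n" .
    have "norm (pochhammer_quot ps n * (of_nat n * (of_nat n + w)))
        = norm (pochhammer_quot ps n) * (real n * norm (of_nat n + w))"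
      by (simp add: norm_mult)
    also have "\<dots> \<le> C * real n powr (- E) * (real n * ((1 + norm w) * real n))"
      using C(1) n nw by (intro mult_mono C(2)[OF elim] mult_left_mono) auto
    also have "\<dots> = C * (1 + norm w) * (real n powr (- E) * real n powr 2)"
      using n by (simp add: powr_numeral power2_eq_square mult_ac)
    also have "\<dots> = C * (1 + norm w) * real n powr (2 - E)"
      by (simp only: powr_add[symmetric]) (simp add: algebra_simps)
    finally show ?case .
  qed
  with lim show ?thesis using Lim_null_comparison by force
qed

section \<open>Dougall's very-well-poised 5F4 sum\<close>

text \<open>wp_term A b c d n is the n-th term of the well-poised 4F3(A, b, c, d; 1 + A - b, 1 + A - c,
  1 + A - d; 1); the factor (A + 2n)/A = (A/2 + 1)_n/(A/2)_n makes it very-well-poised.\<close>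
definition wp_term :: "complex \<Rightarrow> complex \<Rightarrow> complex \<Rightarrow> complex \<Rightarrow> nat \<Rightarrow> complex" where
  "wp_term A b c d n = pochhammer A n * pochhammer b n * pochhammer c n * pochhammer d n /
     (fact n * pochhammer (1 + A - b) n * pochhammer (1 + A - c) n * pochhammer (1 + A - d) n)"

definition dougall_term :: "complex \<Rightarrow> complex \<Rightarrow> complex \<Rightarrow> complex \<Rightarrow> nat \<Rightarrow> complex" where
  "dougall_term A b c d n = wp_term A b c d n * (A + 2 * of_nat n) / A"

text \<open>The WZ certificate of the recurrence in A, found with Zeilberger's algorithm.\<close>
definition dougall_cert :: "complex \<Rightarrow> complex \<Rightarrow> complex \<Rightarrow> complex \<Rightarrow> nat \<Rightarrow> complex" where
  "dougall_cert A b c d n = wp_term A b c d n * (of_nat n * (of_nat n + 1 + 2 * A - (b + c + d))) /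
     (A * (1 + A - (b + c + d)))"

lemma wp_term_Suc:
  "wp_term A b c d (Suc n) = wp_term A b c d n *
     ((A + of_nat n) * (b + of_nat n) * (c + of_nat n) * (d + of_nat n) /
     ((of_nat n + 1) * (1 + A - b + of_nat n) * (1 + A - c + of_nat n) * (1 + A - d + of_nat n)))"
  unfolding wp_term_def pochhammer_Suc fact_Suc
  by (simp add: times_divide_times_eq mult_ac add_ac)

lemma wp_term_shift:
  assumes "A \<noteq> 0" "1 + A - b \<notin> \<int>\<^sub>\<le>\<^sub>0" "1 + A - c \<notin> \<int>\<^sub>\<le>\<^sub>0" "1 + A - d \<notin> \<int>\<^sub>\<le>\<^sub>0"
  shows "wp_term (A + 1) b c d n = wp_term A b c d n * ((A + of_nat n) / A *
     ((1 + A - b) * (1 + A - c) * (1 + A - d)) /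
     ((1 + A - b + of_nat n) * (1 + A - c + of_nat n) * (1 + A - d + of_nat n)))"
proof -
  have e: "1 + (A + 1) - x = (1 + A - x) + 1" for x :: complex by simp
  have nz: "1 + A - b \<noteq> 0" "1 + A - c \<noteq> 0" "1 + A - d \<noteq> 0" using assms(2-4) by auto
  note z = assms(2-4)[THEN pochhammer_neq_0_of_notin_nonpos_Ints, of n]
    assms(2-4)[THEN add_of_nat_neq_0_of_notin_nonpos_Ints, of n]
  show ?thesis
    unfolding wp_term_def e pochhammer_plus_one[OF assms(1)] pochhammer_plus_one[OF nz(1)]
      pochhammer_plus_one[OF nz(2)] pochhammer_plus_one[OF nz(3)]
    using z nz assms(1) by (simp add: field_simps)
qed

lemma dougall_wz_polynomial:
  fixes A b c d N :: complex
  shows "(1 + A - c - d) * (1 + A - b - d) * (1 + A - b - c) * (A + N) * (A + 1 + 2 * N)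
     - (1 + A - (b + c + d)) * (A + 2 * N) * ((1 + A - b + N) * (1 + A - c + N) * (1 + A - d + N))
   = (A + N) * (b + N) * (c + N) * (d + N) * (N + 1 + 1 + 2 * A - (b + c + d))
     - N * (N + 1 + 2 * A - (b + c + d)) * ((1 + A - b + N) * (1 + A - c + N) * (1 + A - d + N))"
  by algebra

lemma dougall_term_telescoping:
  assumes A: "A \<noteq> 0" "A + 1 \<noteq> 0" and excess: "1 + A - (b + c + d) \<noteq> 0"
    and np: "1 + A - b \<notin> \<int>\<^sub>\<le>\<^sub>0" "1 + A - c \<notin> \<int>\<^sub>\<le>\<^sub>0" "1 + A - d \<notin> \<int>\<^sub>\<le>\<^sub>0"
  shows "((1 + A) * (1 + A - c - d) * (1 + A - b - d) * (1 + A - b - c)) * dougall_term (A + 1) b c d n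
       - ((1 + A - b) * (1 + A - c) * (1 + A - d) * (1 + A - (b + c + d))) * dougall_term A b c d n
     = ((1 + A - b) * (1 + A - c) * (1 + A - d) * (1 + A - (b + c + d))) *
       (dougall_cert A b c d (Suc n) - dougall_cert A b c d n)"
proof -
  define N :: complex where "N = of_nat n"
  define B where "B = wp_term A b c d n"
  define U where "U = (1 + A - b) * (1 + A - c) * (1 + A - d)"
  define P where "P = (1 + A - b + N) * (1 + A - c + N) * (1 + A - d + N)"
  define D where "D = (1 + A - c - d) * (1 + A - b - d) * (1 + A - b - c)"
  define S where "S = 1 + A - (b + c + d)"
  define G where "G = (A + N) * (b + N) * (c + N) * (d + N)"
  define T where "T = N + 1 + 2 * A - (b + c + d)"
  define T' where "T' = N + 1 + 1 + 2 * A - (b + c + d)"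
  have P0: "P \<noteq> 0"
    unfolding P_def N_def using np by (simp add: add_of_nat_neq_0_of_notin_nonpos_Ints)
  have S0: "S \<noteq> 0" unfolding S_def by (rule excess)
  define M where "M = N + 1"
  have M0: "M \<noteq> 0" unfolding M_def N_def by (metis of_nat_Suc of_nat_neq_0 add.commute)
  have "(1 + A) * D * dougall_term (A + 1) b c d n - U * S * dougall_term A b c d n
      = D * (B * ((A + N) / A * U / P) * (A + 1 + 2 * N)) - U * S * (B * (A + 2 * N) / A)"
    unfolding dougall_term_def wp_term_shift[OF A(1) np] B_def N_def U_def P_def
    using A(2) by (simp add: add_ac mult_ac)
  also have "\<dots> = B * U / (A * P) * (D * (A + N) * (A + 1 + 2 * N) - S * (A + 2 * N) * P)"
    using A(1) P0 by (simp add: field_simps)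
  also have "D * (A + N) * (A + 1 + 2 * N) - S * (A + 2 * N) * P = G * T' - N * T * P"
    unfolding D_def S_def P_def G_def T_def T'_def by (rule dougall_wz_polynomial)
  also have "B * U / (A * P) * (G * T' - N * T * P)
      = U * S * (B * (G / (M * P)) * (M * T') / (A * S) - B * (N * T) / (A * S))"
    using A(1) P0 M0 S0 by (simp add: field_simps)
  also have "\<dots> = U * S * (dougall_cert A b c d (Suc n) - dougall_cert A b c d n)"
    unfolding dougall_cert_def wp_term_Suc B_def G_def P_def S_def M_def N_def T_def T'_def
    by (simp add: add_ac mult_ac)
  finally show ?thesis unfolding U_def D_def S_def by (simp only: mult_ac add_ac)
qed

definition dougall_pairs :: "complex \<Rightarrow> complex \<Rightarrow> complex \<Rightarrow> complex \<Rightarrow> (complex \<times> complex) list" where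
  "dougall_pairs A b c d = [(A, 1), (b, 1 + A - b), (c, 1 + A - c), (d, 1 + A - d)]"

lemma wp_term_eq_pochhammer_quot: "wp_term A b c d n = pochhammer_quot (dougall_pairs A b c d) n"
  unfolding wp_term_def pochhammer_quot_def dougall_pairs_def
  by (simp add: pochhammer_fact times_divide_times_eq mult_ac)

lemma pochhammer_quot_excess_dougall_pairs:
  "pochhammer_quot_excess (dougall_pairs A b c d) = 2 + 2 * (1 + A - (b + c + d))"
  unfolding pochhammer_quot_excess_def dougall_pairs_def by (simp add: algebra_simps)

locale dougall_params =
  fixes A b c d :: complex
  assumes A_nonpole: "A \<notin> \<int>\<^sub>\<le>\<^sub>0"
    and Re_excess_pos: "Re (1 + A - (b + c + d)) > 0"
    and denominators: "1 + A - b \<notin> \<int>\<^sub>\<le>\<^sub>0" "1 + A - c \<notin> \<int>\<^sub>\<le>\<^sub>0" "1 + A - d \<notin> \<int>\<^sub>\<le>\<^sub>0"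
begin

lemma A_neq_0: "A \<noteq> 0"
  using A_nonpole by auto

lemma excess_neq_0: "1 + A - (b + c + d) \<noteq> 0"
proof
  assume "1 + A - (b + c + d) = 0"
  then have "Re (1 + A - (b + c + d)) = 0" by (simp only: zero_complex.simps)
  with Re_excess_pos show False by simp
qed

lemma dougall_pairs_denominators: "\<forall>p\<in>set (dougall_pairs A b c d). snd p \<notin> \<int>\<^sub>\<le>\<^sub>0"
  using denominators unfolding dougall_pairs_def by auto

lemma Re_pochhammer_quot_excess: "Re (pochhammer_quot_excess (dougall_pairs A b c d)) > 2"
  using Re_excess_pos by (simp add: pochhammer_quot_excess_dougall_pairs)

lemma summable_dougall_term: "summable (dougall_term A b c d)"
proof (rule summable_comparison_test')
  show "summable (\<lambda>n. (1 + 1 / norm A) * (norm (wp_term A b c d n) * (1 + 2 * real n)))"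
    unfolding wp_term_eq_pochhammer_quot
    by (intro summable_mult summable_pochhammer_quot_linear dougall_pairs_denominators
        Re_pochhammer_quot_excess)
next
  fix n :: nat
  have "norm (A + 2 * of_nat n) \<le> norm A + 2 * real n"
    using norm_triangle_ineq[of A "2 * of_nat n"] by (simp add: norm_mult)
  also have "\<dots> \<le> (1 + 2 * real n) * (norm A + 1)" by (simp add: algebra_simps)
  finally have "norm (A + 2 * of_nat n) / norm A \<le> (1 + 2 * real n) * (1 + 1 / norm A)"
    using A_neq_0 by (simp add: field_simps)
  then have "norm (wp_term A b c d n) * (norm (A + 2 * of_nat n) / norm A)
      \<le> norm (wp_term A b c d n) * ((1 + 2 * real n) * (1 + 1 / norm A))"
    by (rule mult_left_mono) simp
  then show "norm (dougall_term A b c d n) \<le> (1 + 1 / norm A) * (norm (wp_term A b c d n) * (1 + 2 * real n))"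
    unfolding dougall_term_def by (simp add: norm_mult norm_divide mult_ac)
qed

lemma dougall_cert_tendsto_0: "dougall_cert A b c d \<longlonglongrightarrow> 0"
proof -
  have "(\<lambda>n. wp_term A b c d n * (of_nat n * (of_nat n + (1 + 2 * A - (b + c + d)))))
          \<longlonglongrightarrow> 0"
    unfolding wp_term_eq_pochhammer_quot
    by (intro pochhammer_quot_quadratic_tendsto_0 dougall_pairs_denominators Re_pochhammer_quot_excess)
  then have "(\<lambda>n. wp_term A b c d n * (of_nat n * (of_nat n + (1 + 2 * A - (b + c + d))))
               / (A * (1 + A - (b + c + d)))) \<longlonglongrightarrow> 0"
    by (simp add: tendsto_divide_zero)
  moreover have "dougall_cert A b c d = (\<lambda>n. wp_term A b c d n *
      (of_nat n * (of_nat n + (1 + 2 * A - (b + c + d)))) / (A * (1 + A - (b + c + d))))"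
    by (rule ext) (simp add: dougall_cert_def add_ac)
  ultimately show ?thesis by simp
qed

lemma shift: "dougall_params (A + 1) b c d"
proof
  show "A + 1 \<notin> \<int>\<^sub>\<le>\<^sub>0"
    using add_of_nat_notin_nonpos_Ints[OF A_nonpole, of 1] by simp
  show "Re (1 + (A + 1) - (b + c + d)) > 0"
    using Re_excess_pos by simp
  have "1 + (A + 1) - x = (1 + A - x) + of_nat 1" for x :: complex by simp
  then show "1 + (A + 1) - b \<notin> \<int>\<^sub>\<le>\<^sub>0" "1 + (A + 1) - c \<notin> \<int>\<^sub>\<le>\<^sub>0" "1 + (A + 1) - d \<notin> \<int>\<^sub>\<le>\<^sub>0"
    using denominators by (metis add_of_nat_notin_nonpos_Ints)+
qed

lemma shift_nat: "dougall_params (A + of_nat m) b c d"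
proof (induction m)
  case 0
  show ?case using dougall_params_axioms by simp
next
  case (Suc m)
  have "A + of_nat (Suc m) = A + of_nat m + 1" by simp
  with dougall_params.shift[OF Suc] show ?case by metis
qed

lemma dougall_sum_recurrence:
  "((1 + A) * (1 + A - c - d) * (1 + A - b - d) * (1 + A - b - c)) * suminf (dougall_term (A + 1) b c d)
   = ((1 + A - b) * (1 + A - c) * (1 + A - d) * (1 + A - (b + c + d))) * suminf (dougall_term A b c d)"
  (is "?den * ?S1 = ?num * ?S0")
proof -
  have A1: "A + 1 \<noteq> 0"
    using dougall_params.A_neq_0[OF shift] .
  have "(\<lambda>n. ?den * dougall_term (A + 1) b c d n - ?num * dougall_term A b c d n) sums (?den * ?S1 - ?num * ?S0)"
    using dougall_params.summable_dougall_term[OF shift] summable_dougall_term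
    by (intro sums_diff sums_mult summable_sums)
  moreover have "(\<lambda>n. dougall_cert A b c d (Suc n) - dougall_cert A b c d n) sums 0"
    using telescope_sums[OF dougall_cert_tendsto_0] by (simp add: dougall_cert_def)
  then have "(\<lambda>n. ?den * dougall_term (A + 1) b c d n - ?num * dougall_term A b c d n) sums 0"
    unfolding dougall_term_telescoping[OF A_neq_0 A1 excess_neq_0 denominators]
    using sums_mult[of _ 0 ?num] by simp
  ultimately show ?thesis
    using sums_unique2 by force
qed

lemma norm_dougall_sum_minus_one_le:
  assumes "\<And>k. norm (dougall_term A b c d (Suc k)) \<le> M k" and "summable M"
  shows "norm (suminf (dougall_term A b c d) - 1) \<le> (\<Sum>k. M k)"
proof -
  have tail_summable: "summable (\<lambda>k. norm (dougall_term A b c d (Suc k)))"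
    using assms by (intro summable_comparison_test'[OF assms(2)]) simp
  have "suminf (dougall_term A b c d) - 1 = (\<Sum>k. dougall_term A b c d (Suc k))"
    using suminf_split_head[OF summable_dougall_term] A_neq_0 by (simp add: dougall_term_def wp_term_def)
  then have "norm (suminf (dougall_term A b c d) - 1) \<le> (\<Sum>k. norm (dougall_term A b c d (Suc k)))"
    using summable_norm[OF tail_summable] by simp
  also have "\<dots> \<le> (\<Sum>k. M k)"
    by (rule suminf_le[OF assms(1) tail_summable assms(2)])
  finally show ?thesis .
qed

end

text \<open>Uniform majorant for the tails of the series in the shifted parameter A + m. For
  m \<ge> m0 each factor of the term ratio of wp_term (A + m) b c d is dominated by the
  corresponding factor of the term ratio of a fixed hypergeometric term with real parameters,
  and the very first ratio gains the extra factor (g + m0) / (g + m), which tends to 0.\<close>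
definition majorant_pairs :: "real \<Rightarrow> real \<Rightarrow> real \<Rightarrow> nat \<Rightarrow> (complex \<times> complex) list" where
  "majorant_pairs al be g m0 =
     [(of_real (al + m0), of_real (g + m0)), (of_real be, 1),
      (of_real be, of_real (g + m0)), (of_real be, of_real (g + m0))]"

definition majorant_ratio :: "real \<Rightarrow> real \<Rightarrow> real \<Rightarrow> nat \<Rightarrow> nat \<Rightarrow> real" where
  "majorant_ratio al be g m0 n =
     (al + m0 + n) / (g + m0 + n) * ((be + n) / (1 + n)) * ((be + n) / (g + m0 + n)) *
     ((be + n) / (g + m0 + n))"

lemma add_mult_square_le:
  fixes c s t :: real
  assumes "c \<ge> 0" "0 < s" "s \<le> t"
  shows "(c + t) * s ^ 2 \<le> (c + s) * t ^ 2"
proof -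
  have "c * s ^ 2 \<le> c * t ^ 2"
    using assms by (intro mult_left_mono power_mono) auto
  moreover have "t * s ^ 2 \<le> s * t ^ 2"
    using assms by (simp add: power2_eq_square mult_left_mono mult.assoc mult.left_commute[of s t])
  ultimately show ?thesis by (simp add: algebra_simps)
qed

lemma majorant_ratio_ineq:
  fixes al be g :: real and m0 m n :: nat
  assumes "g \<le> al" "g + real m0 > 0" "m0 \<le> m" "be \<ge> 0"
  shows "(al + m + n) * (be + n) ^ 3 / ((1 + n) * (g + m + n) ^ 3)
           \<le> majorant_ratio al be g m0 n * ((g + m0 + n) / (g + m + n))"
proof -
  define G G0 where "G = g + m + n" and "G0 = g + m0 + n"
  have G0: "G0 > 0" and GG: "G0 \<le> G" and G: "G > 0"
    using assms unfolding G_def G0_def by simp_all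
  have e: "al + m + n = (al - g) + G" "al + m0 + n = (al - g) + G0"
    unfolding G_def G0_def by simp_all
  have bx: "(be + n) ^ 3 / (1 + n) \<ge> 0" using assms by simp
  have "(al + m + n) * (be + n) ^ 3 / ((1 + n) * (g + m + n) ^ 3)
      = ((al - g) + G) / G ^ 3 * ((be + n) ^ 3 / (1 + n))"
    unfolding e G_def by (simp add: field_simps)
  also have "\<dots> \<le> ((al - g) + G0) / (G0 ^ 2 * G) * ((be + n) ^ 3 / (1 + n))"
  proof (rule mult_right_mono[OF _ bx])
    have "((al - g) + G) * G0 ^ 2 \<le> ((al - g) + G0) * G ^ 2"
      using add_mult_square_le[of "al - g" G0 G] assms(1) G0 GG by simp
    then show "((al - g) + G) / G ^ 3 \<le> ((al - g) + G0) / (G0 ^ 2 * G)"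
      using G G0 by (simp add: divide_simps power2_eq_square power3_eq_cube)
  qed
  also have "\<dots> = majorant_ratio al be g m0 n * ((g + m0 + n) / (g + m + n))"
  proof -
    have regroup: "p / (G0 ^ 2 * G) * (q ^ 3 / X) = (p / G0 * (q / X) * (q / G0) * (q / G0)) * (G0 / G)"
      if "X \<noteq> 0" for p q X :: real
      using that G G0 by (simp add: field_simps power2_eq_square power3_eq_cube)
    have "real (1 + n) \<noteq> 0" by simp
    then show ?thesis
      unfolding majorant_ratio_def e(2)[symmetric] G0_def[symmetric] G_def[symmetric] by (rule regroup)
  qed
  finally show ?thesis .
qed

lemma norm_of_real_add_of_nat_quot:
  assumes "x \<ge> 0" "y > 0"
  shows "norm ((of_real x + of_nat n) / (of_real y + of_nat n) :: complex) = (x + n) / (y + n)"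
proof -
  have "(of_real x + of_nat n :: complex) = of_real (x + real n)"
    "(of_real y + of_nat n :: complex) = of_real (y + real n)" by simp_all
  then show ?thesis using assms by (simp only: norm_divide norm_of_real) simp
qed

lemma norm_pochhammer_quot_majorant_Suc:
  assumes "al \<ge> 0" "be \<ge> 0" "g + m0 > 0"
  shows "norm (pochhammer_quot (majorant_pairs al be g m0) (Suc n)) =
           norm (pochhammer_quot (majorant_pairs al be g m0) n) * majorant_ratio al be g m0 n"
proof -
  have "norm ((of_real (al + m0) + of_nat n) / (of_real (g + m0) + of_nat n) :: complex)
      = (al + m0 + n) / (g + m0 + n)"
    "norm ((of_real be + of_nat n) / (of_real (g + m0) + of_nat n) :: complex) = (be + n) / (g + m0 + n)"
    using assms by (subst norm_of_real_add_of_nat_quot; simp)+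
  moreover have "norm ((of_real be + of_nat n) / (1 + of_nat n) :: complex) = (be + n) / (1 + n)"
    using norm_of_real_add_of_nat_quot[of be 1 n] assms by simp
  ultimately show ?thesis
    unfolding pochhammer_quot_Suc norm_mult majorant_pairs_def[of al be g m0] majorant_ratio_def
    by (simp only: prod_list.Cons prod_list.Nil list.map norm_mult fst_conv snd_conv mult_1_right
        norm_one mult_1_left mult_ac)
qed

lemma norm_dougall_ratio_factor_le:
  fixes A x :: complex
  assumes "norm x \<le> be" "g \<le> Re (1 + A - x)" "g + real m + real n > 0"
  shows "norm (x + of_nat n) / norm (1 + (A + of_nat m) - x + of_nat n) \<le> (be + n) / (g + m + n)"
proof (rule frac_le)
  show "norm (x + of_nat n) \<le> be + n"
    using norm_triangle_ineq[of x "of_nat n"] assms(1) by simp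
  have "g + m + n \<le> Re (1 + (A + of_nat m) - x + of_nat n)"
    using assms(2) by simp
  also have "\<dots> \<le> norm (1 + (A + of_nat m) - x + of_nat n)"
    by (rule complex_Re_le_cmod)
  finally show "g + m + n \<le> norm (1 + (A + of_nat m) - x + of_nat n)" .
qed (use assms order_trans[OF norm_ge_zero assms(1)] in auto)

lemma majorant_ratio_nonneg:
  "al \<ge> 0 \<Longrightarrow> be \<ge> 0 \<Longrightarrow> g + real m0 > 0 \<Longrightarrow> majorant_ratio al be g m0 n \<ge> 0"
  unfolding majorant_ratio_def by (intro mult_nonneg_nonneg divide_nonneg_pos) auto

lemma summable_majorant_pairs:
  assumes "g + real m0 > 0" "3 * g + 2 * real m0 > al + 3 * be + 1"
  shows "summable (\<lambda>k. norm (pochhammer_quot (majorant_pairs al be g m0) (Suc k)) * (1 + 2 * real (Suc k)))"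
proof -
  have "g + real m0 \<notin> \<int>\<^sub>\<le>\<^sub>0"
    using assms(1) by (auto dest: nonpos_Ints_nonpos)
  then have "complex_of_real (g + real m0) \<notin> \<int>\<^sub>\<le>\<^sub>0"
    by (subst of_real_in_nonpos_Ints_iff)
  then have "\<forall>p\<in>set (majorant_pairs al be g m0). snd p \<notin> \<int>\<^sub>\<le>\<^sub>0"
    unfolding majorant_pairs_def by auto
  moreover have "Re (pochhammer_quot_excess (majorant_pairs al be g m0)) > 2"
    unfolding majorant_pairs_def pochhammer_quot_excess_def using assms(2) by (simp add: algebra_simps)
  ultimately show ?thesis
    using summable_pochhammer_quot_linear by (subst summable_Suc_iff) blast
qed

locale dougall_majorant =
  fixes A b c d :: complex and al be g :: real and m0 :: nat
  assumes al: "al \<ge> norm A" "al \<ge> g" and be: "be \<ge> norm b" "be \<ge> norm c" "be \<ge> norm d"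
    and g: "g \<le> Re (1 + A - b)" "g \<le> Re (1 + A - c)" "g \<le> Re (1 + A - d)"
    and m0: "g + real m0 > 0"
begin

lemma al_nonneg: "al \<ge> 0" and be_nonneg: "be \<ge> 0"
  using al(1) be(1) norm_ge_zero order_trans by blast+

lemma norm_dougall_ratio_le:
  assumes "m0 \<le> m"
  shows "norm (\<Prod>p\<leftarrow>dougall_pairs (A + of_nat m) b c d. (fst p + of_nat n) / (snd p + of_nat n))
    \<le> majorant_ratio al be g m0 n * ((g + m0 + n) / (g + m + n))"
proof -
  have pos: "g + real m + real n > 0" using m0 assms by simp
  have "norm (A + of_nat m + of_nat n) \<le> norm A + norm (of_nat (m + n) :: complex)"
    using norm_triangle_ineq[of A "of_nat (m + n)"] by (simp add: add.assoc)
  then have first: "norm (A + of_nat m + of_nat n) / (1 + n) \<le> (al + m + n) / (1 + n)"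
    using al unfolding norm_of_nat by (intro divide_right_mono) simp_all
  have "norm (1 + of_nat n :: complex) = 1 + n"
    using norm_of_nat[of "Suc n"] by simp
  then have "norm (\<Prod>p\<leftarrow>dougall_pairs (A + of_nat m) b c d. (fst p + of_nat n) / (snd p + of_nat n))
      = norm (A + of_nat m + of_nat n) / (1 + n) *
        (norm (b + of_nat n) / norm (1 + (A + of_nat m) - b + of_nat n)) *
        (norm (c + of_nat n) / norm (1 + (A + of_nat m) - c + of_nat n)) *
        (norm (d + of_nat n) / norm (1 + (A + of_nat m) - d + of_nat n))"
    unfolding dougall_pairs_def
    by (simp only: prod_list.Cons prod_list.Nil list.map norm_mult norm_divide fst_conv snd_conv
        mult_1_right mult.assoc)
  also have "\<dots> \<le> (al + m + n) / (1 + n) * ((be + n) / (g + m + n)) * ((be + n) / (g + m + n)) *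
      ((be + n) / (g + m + n))"
    using pos be_nonneg al_nonneg
    by (intro mult_mono first norm_dougall_ratio_factor_le[OF be(1) g(1) pos]
        norm_dougall_ratio_factor_le[OF be(2) g(2) pos] norm_dougall_ratio_factor_le[OF be(3) g(3) pos])
       (auto intro!: mult_nonneg_nonneg divide_nonneg_pos)
  also have "\<dots> = (al + m + n) * (be + n) ^ 3 / ((1 + n) * (g + m + n) ^ 3)"
    by (simp add: field_simps power3_eq_cube)
  also have "\<dots> \<le> majorant_ratio al be g m0 n * ((g + m0 + n) / (g + m + n))"
    using al(2) m0 assms be_nonneg by (rule majorant_ratio_ineq)
  finally show ?thesis .
qed

lemma norm_wp_term_shift_le:
  assumes "m0 \<le> m"
  shows "norm (wp_term (A + of_nat m) b c d (Suc n))
           \<le> (g + m0) / (g + m) * norm (pochhammer_quot (majorant_pairs al be g m0) (Suc n))"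
proof -
  have c0: "(g + m0) / (g + m) \<ge> 0" using m0 assms by simp
  note ratio_Suc = norm_pochhammer_quot_majorant_Suc[OF al_nonneg be_nonneg m0]
  show ?thesis unfolding wp_term_eq_pochhammer_quot
  proof (induction n)
    case 0
    have "norm (pochhammer_quot (dougall_pairs (A + of_nat m) b c d) (Suc 0))
        = norm (\<Prod>p\<leftarrow>dougall_pairs (A + of_nat m) b c d. (fst p + of_nat 0) / (snd p + of_nat 0))"
      unfolding pochhammer_quot_Suc by simp
    also have "\<dots> \<le> majorant_ratio al be g m0 0 * ((g + m0 + real 0) / (g + m + real 0))"
      by (rule norm_dougall_ratio_le[OF assms])
    also have "\<dots> = (g + m0) / (g + m) * norm (pochhammer_quot (majorant_pairs al be g m0) (Suc 0))"
      unfolding ratio_Suc by simp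
    finally show ?case .
  next
    case (Suc n)
    have q1: "(g + m0 + real (Suc n)) / (g + m + real (Suc n)) \<le> 1"
      and q0: "(g + m0 + real (Suc n)) / (g + m + real (Suc n)) \<ge> 0" using m0 assms by simp_all
    have "norm (pochhammer_quot (dougall_pairs (A + of_nat m) b c d) (Suc (Suc n)))
        = norm (pochhammer_quot (dougall_pairs (A + of_nat m) b c d) (Suc n)) *
          norm (\<Prod>p\<leftarrow>dougall_pairs (A + of_nat m) b c d. (fst p + of_nat (Suc n)) / (snd p + of_nat (Suc n)))"
      by (subst pochhammer_quot_Suc) (simp only: norm_mult)
    also have "\<dots> \<le> ((g + m0) / (g + m) * norm (pochhammer_quot (majorant_pairs al be g m0) (Suc n))) *
        (majorant_ratio al be g m0 (Suc n) * ((g + m0 + real (Suc n)) / (g + m + real (Suc n))))"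
      by (intro mult_mono Suc.IH norm_dougall_ratio_le[OF assms] mult_nonneg_nonneg c0 norm_ge_zero)
    also have "\<dots> \<le> ((g + m0) / (g + m) * norm (pochhammer_quot (majorant_pairs al be g m0) (Suc n))) *
        majorant_ratio al be g m0 (Suc n)"
      using q0 q1 majorant_ratio_nonneg[OF al_nonneg be_nonneg m0] c0
      by (intro mult_left_mono mult_right_le_one_le mult_nonneg_nonneg) auto
    also have "\<dots> = (g + m0) / (g + m) * norm (pochhammer_quot (majorant_pairs al be g m0) (Suc (Suc n)))"
      unfolding ratio_Suc[of "Suc n"] by simp
    finally show ?case .
  qed
qed

lemma norm_dougall_term_shift_le:
  assumes "m0 \<le> m" and large: "norm (A + of_nat m) \<ge> 1"
  shows "norm (dougall_term (A + of_nat m) b c d (Suc k))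
           \<le> (g + m0) / (g + m) *
              (norm (pochhammer_quot (majorant_pairs al be g m0) (Suc k)) * (1 + 2 * real (Suc k)))"
proof -
  define A' where "A' = A + of_nat m"
  have "norm (A' + 2 * of_nat (Suc k)) \<le> norm A' + norm (2 * of_nat (Suc k) :: complex)"
    by (rule norm_triangle_ineq)
  also have "norm (2 * of_nat (Suc k) :: complex) = 2 * real (Suc k)"
    by (simp only: norm_mult norm_numeral norm_of_nat)
  also have "norm A' + 2 * real (Suc k) \<le> norm A' * (1 + 2 * real (Suc k))"
    using mult_left_mono[OF large, of "2 * real (Suc k)"] unfolding A'_def by (simp add: algebra_simps)
  finally have ratio: "norm (A' + 2 * of_nat (Suc k)) / norm A' \<le> 1 + 2 * real (Suc k)"
    using large unfolding A'_def by (simp add: divide_le_eq mult.commute)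
  have "norm (dougall_term A' b c d (Suc k))
      = norm (wp_term A' b c d (Suc k)) * (norm (A' + 2 * of_nat (Suc k)) / norm A')"
    unfolding dougall_term_def by (simp add: norm_mult norm_divide)
  also have "\<dots> \<le> ((g + m0) / (g + m) * norm (pochhammer_quot (majorant_pairs al be g m0) (Suc k))) *
      (1 + 2 * real (Suc k))"
    unfolding A'_def using m0 assms(1)
    by (intro mult_mono norm_wp_term_shift_le[OF assms(1)] ratio[unfolded A'_def]) auto
  finally show ?thesis unfolding A'_def by (simp only: mult_ac)
qed

end

context dougall_params
begin

lemma dougall_sum_shift_minus_one_le:
  obtains g :: real and m0 :: nat and K :: real where "g + m0 > 0"
    "\<And>m. m \<ge> m0 \<Longrightarrow>
       norm (suminf (dougall_term (A + of_nat m) b c d) - 1) \<le> (g + m0) / (g + m) * K"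
proof -
  define g where "g = min (Re (1 + A - b)) (min (Re (1 + A - c)) (Re (1 + A - d)))"
  define al where "al = norm A + \<bar>g\<bar>"
  define be where "be = norm b + norm c + norm d"
  define m0 where "m0 = nat \<lceil>3 * \<bar>g\<bar> + \<bar>Re A\<bar> + al + 3 * be + 3\<rceil>"
  have m0r: "real m0 \<ge> 3 * \<bar>g\<bar> + \<bar>Re A\<bar> + al + 3 * be + 3" unfolding m0_def by linarith
  have al: "al \<ge> norm A" "al \<ge> g" unfolding al_def using norm_ge_zero[of A] by linarith+
  have be: "be \<ge> norm b" "be \<ge> norm c" "be \<ge> norm d" "be \<ge> 0" unfolding be_def by auto
  have gg: "g \<le> Re (1 + A - b)" "g \<le> Re (1 + A - c)" "g \<le> Re (1 + A - d)" unfolding g_def by auto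
  have gm0: "g + real m0 > 0" using m0r be al by linarith
  interpret majorant: dougall_majorant A b c d al be g m0
    using al be gg gm0 by unfold_locales auto
  define M where "M k = norm (pochhammer_quot (majorant_pairs al be g m0) (Suc k)) * (1 + 2 * real (Suc k))"
    for k
  have "summable M"
    unfolding M_def using gm0 m0r be al by (intro summable_majorant_pairs) auto
  show ?thesis
  proof (rule that[OF gm0])
    fix m assume m: "m \<ge> m0"
    interpret shifted: dougall_params "A + of_nat m" b c d by (rule shift_nat)
    have "norm (A + of_nat m) \<ge> 1"
      using m m0r al be complex_Re_le_cmod[of "A + of_nat m"] by simp
    then have "norm (dougall_term (A + of_nat m) b c d (Suc k)) \<le> (g + m0) / (g + m) * M k" for k
      unfolding M_def by (rule majorant.norm_dougall_term_shift_le[OF m])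
    then have "norm (suminf (dougall_term (A + of_nat m) b c d) - 1) \<le> (\<Sum>k. (g + m0) / (g + m) * M k)"
      using \<open>summable M\<close> by (intro shifted.norm_dougall_sum_minus_one_le summable_mult)
    also have "\<dots> = (g + m0) / (g + m) * suminf M"
      by (rule suminf_mult[OF \<open>summable M\<close>])
    finally show "norm (suminf (dougall_term (A + of_nat m) b c d) - 1) \<le> (g + m0) / (g + m) * suminf M" .
  qed
qed

lemma dougall_sum_shift_tendsto_1: "(\<lambda>m. suminf (dougall_term (A + of_nat m) b c d)) \<longlonglongrightarrow> 1"
proof -
  obtain g :: real and m0 :: nat and K where "g + m0 > 0" and
    bound: "\<And>m. m \<ge> m0 \<Longrightarrow>
      norm (suminf (dougall_term (A + of_nat m) b c d) - 1) \<le> (g + m0) / (g + m) * K"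
    using dougall_sum_shift_minus_one_le by blast
  have "(\<lambda>m. (g + m0) * K * inverse (g + real m)) \<longlonglongrightarrow> (g + m0) * K * 0"
    by (intro tendsto_mult tendsto_const tendsto_inverse_0_at_top
        filterlim_tendsto_add_at_top[OF tendsto_const filterlim_real_sequentially])
  then have lim: "(\<lambda>m. (g + m0) / (g + m) * K) \<longlonglongrightarrow> 0"
    by (simp add: field_simps)
  have "\<forall>\<^sub>F m in sequentially.
      norm (suminf (dougall_term (A + of_nat m) b c d) - 1) \<le> (g + m0) / (g + m) * K"
    using eventually_ge_at_top[of m0] by eventually_elim (rule bound)
  from Lim_null_comparison[OF this lim]
  have "(\<lambda>m. suminf (dougall_term (A + of_nat m) b c d) - 1) \<longlonglongrightarrow> 0" .
  then show ?thesis
    using tendsto_add[OF _ tendsto_const[of 1]] by force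
qed

end

definition dougall_value :: "complex \<Rightarrow> complex \<Rightarrow> complex \<Rightarrow> complex \<Rightarrow> complex" where
  "dougall_value A b c d =
     Gamma (1 + A - b) * Gamma (1 + A - c) * Gamma (1 + A - d) * Gamma (1 + A - (b + c + d)) /
     (Gamma (1 + A) * Gamma (1 + A - c - d) * Gamma (1 + A - b - d) * Gamma (1 + A - b - c))"

definition dougall_shift_pairs :: "complex \<Rightarrow> complex \<Rightarrow> complex \<Rightarrow> complex \<Rightarrow> (complex \<times> complex) list" where
  "dougall_shift_pairs A b c d =
     [(1 + A - b, 1 + A), (1 + A - c, 1 + A - c - d), (1 + A - d, 1 + A - b - d),
      (1 + A - (b + c + d), 1 + A - b - c)]"

lemma pochhammer_quot_dougall_shift_pairs_tendsto:
  assumes "\<forall>p\<in>set (dougall_shift_pairs A b c d). fst p \<notin> \<int>\<^sub>\<le>\<^sub>0 \<and> snd p \<notin> \<int>\<^sub>\<le>\<^sub>0"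
  shows "pochhammer_quot (dougall_shift_pairs A b c d) \<longlonglongrightarrow> inverse (dougall_value A b c d)"
proof -
  have "pochhammer_quot_excess (dougall_shift_pairs A b c d) = 0"
    unfolding pochhammer_quot_excess_def dougall_shift_pairs_def by (simp add: algebra_simps)
  with pochhammer_quot_asymptotics[OF assms] show ?thesis
    by (simp add: dougall_shift_pairs_def dougall_value_def field_simps)
qed

context dougall_params
begin

lemma dougall_sum_shift_eq:
  assumes "1 + A - c - d \<notin> \<int>\<^sub>\<le>\<^sub>0" "1 + A - b - d \<notin> \<int>\<^sub>\<le>\<^sub>0" "1 + A - b - c \<notin> \<int>\<^sub>\<le>\<^sub>0"
  shows "suminf (dougall_term (A + of_nat m) b c d) =
           pochhammer_quot (dougall_shift_pairs A b c d) m * suminf (dougall_term A b c d)"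
proof (induction m)
  case 0
  show ?case by simp
next
  case (Suc m)
  interpret shifted: dougall_params "A + of_nat m" b c d by (rule shift_nat)
  have e: "1 + (A + of_nat m) - x = (1 + A - x) + of_nat m" for x by simp
  have e2: "1 + (A + of_nat m) - x - y = (1 + A - x - y) + of_nat m" for x y by simp
  have "(1 + A) + of_nat m \<noteq> 0"
    using add_of_nat_neq_0_of_notin_nonpos_Ints[OF dougall_params.A_nonpole[OF shift]] by (simp add: add_ac)
  then have den: "(1 + (A + of_nat m)) * (1 + (A + of_nat m) - c - d) * (1 + (A + of_nat m) - b - d) *
      (1 + (A + of_nat m) - b - c) \<noteq> 0"
    using assms[THEN add_of_nat_neq_0_of_notin_nonpos_Ints, of m] unfolding e2
    by (simp only: mult_eq_0_iff add.assoc) simp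
  have "suminf (dougall_term (A + of_nat (Suc m)) b c d) = suminf (dougall_term (A + of_nat m + 1) b c d)"
    by (simp add: add_ac)
  also have "\<dots> = (\<Prod>p\<leftarrow>dougall_shift_pairs A b c d. (fst p + of_nat m) / (snd p + of_nat m)) *
      suminf (dougall_term (A + of_nat m) b c d)"
    using shifted.dougall_sum_recurrence den
    by (simp add: dougall_shift_pairs_def field_simps e)
  finally show ?case
    unfolding Suc.IH pochhammer_quot_Suc by (simp only: mult_ac)
qed

theorem dougall_sum:
  assumes "1 + A - c - d \<notin> \<int>\<^sub>\<le>\<^sub>0" "1 + A - b - d \<notin> \<int>\<^sub>\<le>\<^sub>0" "1 + A - b - c \<notin> \<int>\<^sub>\<le>\<^sub>0"
  shows "suminf (dougall_term A b c d) = dougall_value A b c d"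
proof -
  define S where "S = suminf (dougall_term A b c d)"
  have "1 + A \<notin> \<int>\<^sub>\<le>\<^sub>0"
    using add_of_nat_notin_nonpos_Ints[OF A_nonpole, of 1] by (simp add: add.commute)
  moreover have "1 + A - (b + c + d) \<notin> \<int>\<^sub>\<le>\<^sub>0"
    using Re_excess_pos by (rule notin_nonpos_Ints_of_Re_pos)
  ultimately have nonpoles: "\<forall>p\<in>set (dougall_shift_pairs A b c d). fst p \<notin> \<int>\<^sub>\<le>\<^sub>0 \<and> snd p \<notin> \<int>\<^sub>\<le>\<^sub>0"
    using assms denominators unfolding dougall_shift_pairs_def by auto
  then have "dougall_value A b c d \<noteq> 0"
    unfolding dougall_value_def dougall_shift_pairs_def by (auto simp: Gamma_eq_zero_iff)
  have "(\<lambda>m. pochhammer_quot (dougall_shift_pairs A b c d) m * S)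
      \<longlonglongrightarrow> inverse (dougall_value A b c d) * S"
    by (intro tendsto_mult tendsto_const pochhammer_quot_dougall_shift_pairs_tendsto nonpoles)
  moreover have "(\<lambda>m. pochhammer_quot (dougall_shift_pairs A b c d) m * S) \<longlonglongrightarrow> 1"
    using dougall_sum_shift_tendsto_1 unfolding dougall_sum_shift_eq[OF assms] S_def .
  ultimately have "inverse (dougall_value A b c d) * S = 1"
    by (rule LIMSEQ_unique)
  with \<open>dougall_value A b c d \<noteq> 0\<close> show ?thesis
    unfolding S_def by (simp add: field_simps)
qed

end

section \<open>The very-well-poised 5F4 series with the extra pair A/2 + 2, A/2 - 1\<close>

lemma wp_term_index_shift:
  assumes "1 + A - b \<notin> \<int>\<^sub>\<le>\<^sub>0" "1 + A - c \<notin> \<int>\<^sub>\<le>\<^sub>0" "1 + A - d \<notin> \<int>\<^sub>\<le>\<^sub>0"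
  shows "wp_term A b c d (Suc k) * (of_nat (Suc k) * (of_nat (Suc k) + A)) =
    A * (A + 1) * b * c * d / ((1 + A - b) * (1 + A - c) * (1 + A - d)) *
    wp_term (A + 2) (b + 1) (c + 1) (d + 1) k"
proof -
  define u v w where "u = 1 + A - b" and "v = 1 + A - c" and "w = 1 + A - d"
  define Pu Pv Pw where "Pu = pochhammer (u + 1) k" and "Pv = pochhammer (v + 1) k" and "Pw = pochhammer (w + 1) k"
  define Qb Qc Qd where "Qb = pochhammer (b + 1) k" and "Qc = pochhammer (c + 1) k" and "Qd = pochhammer (d + 1) k"
  define pA P2 n1 where "pA = pochhammer A (Suc k)" and "P2 = pochhammer (A + 2) k" and "n1 = (of_nat (Suc k) :: complex)"
  define fk :: complex where "fk = fact k"
  have pz: "pochhammer (x + 1) k \<noteq> 0" if "x \<notin> \<int>\<^sub>\<le>\<^sub>0" for x :: complex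
    using add_of_nat_notin_nonpos_Ints[OF that, of 1] by (intro pochhammer_neq_0_of_notin_nonpos_Ints) simp
  have nz: "u \<noteq> 0" "v \<noteq> 0" "w \<noteq> 0" "Pu \<noteq> 0" "Pv \<noteq> 0" "Pw \<noteq> 0" "n1 \<noteq> 0" "fk \<noteq> 0"
    using assms pz[OF assms(1)] pz[OF assms(2)] pz[OF assms(3)]
    unfolding u_def v_def w_def Pu_def Pv_def Pw_def n1_def fk_def by (auto simp del: of_nat_Suc)
  have hp: "pA * (n1 + A) = A * (A + 1) * P2"
    unfolding pA_def P2_def n1_def using pochhammer_Suc_Suc_shift[of A k] by (simp add: add.commute)
  have e: "1 + (A + 2) - (x + 1) = (1 + A - x) + 1" for x :: complex by simp
  have "wp_term A b c d (Suc k) * (n1 * (n1 + A))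
      = pA * (b * Qb) * (c * Qc) * (d * Qd) / (fk * n1 * (u * Pu) * (v * Pv) * (w * Pw)) * (n1 * (n1 + A))"
    unfolding wp_term_def pochhammer_rec[of _ k] fact_Suc u_def v_def w_def Pu_def Pv_def Pw_def
      Qb_def Qc_def Qd_def pA_def n1_def fk_def
    by (simp add: add.commute mult_ac)
  also have "\<dots> = (pA * (n1 + A)) * (b * c * d * Qb * Qc * Qd) / (fk * u * v * w * Pu * Pv * Pw)"
    using nz by (simp add: field_simps)
  also have "\<dots> = A * (A + 1) * b * c * d / (u * v * w) * (P2 * Qb * Qc * Qd / (fk * Pu * Pv * Pw))"
    unfolding hp using nz by (simp add: field_simps)
  also have "P2 * Qb * Qc * Qd / (fk * Pu * Pv * Pw) = wp_term (A + 2) (b + 1) (c + 1) (d + 1) k"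
    unfolding wp_term_def e P2_def Qb_def Qc_def Qd_def fk_def Pu_def Pv_def Pw_def u_def v_def w_def
    by (simp add: mult_ac)
  finally show ?thesis unfolding u_def v_def w_def n1_def .
qed

lemma dougall_term_index_shift:
  assumes "1 + A - b \<notin> \<int>\<^sub>\<le>\<^sub>0" "1 + A - c \<notin> \<int>\<^sub>\<le>\<^sub>0" "1 + A - d \<notin> \<int>\<^sub>\<le>\<^sub>0"
    and "A \<noteq> 0" "A + 2 \<noteq> 0"
  shows "dougall_term A b c d (Suc k) * (of_nat (Suc k) * (of_nat (Suc k) + A)) =
    (A + 1) * (A + 2) * b * c * d / ((1 + A - b) * (1 + A - c) * (1 + A - d)) *
    dougall_term (A + 2) (b + 1) (c + 1) (d + 1) k"
proof -
  define U where "U = (1 + A - b) * (1 + A - c) * (1 + A - d)"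
  define W where "W = wp_term (A + 2) (b + 1) (c + 1) (d + 1) k"
  define A2 where "A2 = A + 2"
  have "U \<noteq> 0" unfolding U_def using assms(1-3) by auto
  have "dougall_term A b c d (Suc k) * (of_nat (Suc k) * (of_nat (Suc k) + A))
      = wp_term A b c d (Suc k) * (of_nat (Suc k) * (of_nat (Suc k) + A)) * ((A2 + 2 * of_nat k) / A)"
    using assms(4) unfolding dougall_term_def A2_def by (simp add: field_simps)
  also have "\<dots> = A * (A + 1) * b * c * d / U * W * ((A2 + 2 * of_nat k) / A)"
    unfolding wp_term_index_shift[OF assms(1-3)] U_def W_def ..
  also have "\<dots> = (A + 1) * A2 * b * c * d / U * (W * (A2 + 2 * of_nat k) / A2)"
    using assms(4,5) \<open>U \<noteq> 0\<close> unfolding A2_def[symmetric] by (simp add: field_simps)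
  finally show ?thesis unfolding U_def W_def A2_def dougall_term_def by (simp add: algebra_simps)
qed

lemma dougall_value_shift2:
  assumes "1 + A \<notin> \<int>\<^sub>\<le>\<^sub>0" "1 + A - b \<notin> \<int>\<^sub>\<le>\<^sub>0" "1 + A - c \<notin> \<int>\<^sub>\<le>\<^sub>0" "1 + A - d \<notin> \<int>\<^sub>\<le>\<^sub>0"
    and "A - (b + c + d) \<notin> \<int>\<^sub>\<le>\<^sub>0"
  shows "dougall_value (A + 2) (b + 1) (c + 1) (d + 1) = dougall_value A b c d *
    ((1 + A - b) * (1 + A - c) * (1 + A - d)) / ((A + 1) * (A + 2) * (A - (b + c + d)))"
proof -
  have A2: "1 + A + 1 \<notin> \<int>\<^sub>\<le>\<^sub>0"
    using add_of_nat_notin_nonpos_Ints[OF assms(1), of 1] by simp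
  have e: "1 + (A + 2) - (x + 1) = (1 + A - x) + 1"
    "1 + (A + 2) - (x + 1) - (y + 1) = 1 + A - x - y"
    "1 + (A + 2) - (b + 1 + (c + 1) + (d + 1)) = A - (b + c + d)"
    "1 + (A + 2) = (1 + A + 1) + 1"
    "1 + A - (b + c + d) = (A - (b + c + d)) + 1" for x y by simp_all
  have regroup: "(u * gu) * (v * gv) * (w * gw) * gE / ((a2 * (a1 * g1)) * g_cd * g_bd * g_bc)
      = gu * gv * gw * (E * gE) / (g1 * g_cd * g_bd * g_bc) * (u * v * w) / (q * E)"
    if "a1 * a2 = q" "E \<noteq> 0" "a1 \<noteq> 0" "a2 \<noteq> 0" for u gu v gv w gw gE a1 a2 q g1 g_cd g_bd g_bc E :: complex
    using that by (auto simp: field_simps)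
  have "(1 + A) * (1 + A + 1) = (A + 1) * (A + 2)" "A - (b + c + d) \<noteq> 0" "1 + A \<noteq> 0" "1 + A + 1 \<noteq> 0"
    using assms(1,5) A2 by (auto simp: algebra_simps)
  then show ?thesis
    unfolding dougall_value_def e(2,3,5) unfolding e(1) unfolding e(4)
      Gamma_plus1[OF A2] Gamma_plus1[OF assms(1)] Gamma_plus1[OF assms(2)]
      Gamma_plus1[OF assms(3)] Gamma_plus1[OF assms(4)] Gamma_plus1[OF assms(5)]
    by (rule regroup)
qed

context dougall_params
begin

lemma shift2:
  assumes "Re (A - (b + c + d)) > 0"
  shows "dougall_params (A + 2) (b + 1) (c + 1) (d + 1)"
proof
  show "A + 2 \<notin> \<int>\<^sub>\<le>\<^sub>0"
    using add_of_nat_notin_nonpos_Ints[OF A_nonpole, of 2] by simp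
  show "Re (1 + (A + 2) - (b + 1 + (c + 1) + (d + 1))) > 0"
    using assms by simp
  have "1 + (A + 2) - (x + 1) = (1 + A - x) + of_nat 1" for x :: complex by simp
  then show "1 + (A + 2) - (b + 1) \<notin> \<int>\<^sub>\<le>\<^sub>0" "1 + (A + 2) - (c + 1) \<notin> \<int>\<^sub>\<le>\<^sub>0"
    "1 + (A + 2) - (d + 1) \<notin> \<int>\<^sub>\<le>\<^sub>0"
    using denominators by (metis add_of_nat_notin_nonpos_Ints)+
qed

lemma sums_dougall_term_quadratic:
  assumes Re_pos: "Re (A - (b + c + d)) > 0"
    and nonpoles: "1 + A - c - d \<notin> \<int>\<^sub>\<le>\<^sub>0" "1 + A - b - d \<notin> \<int>\<^sub>\<le>\<^sub>0" "1 + A - b - c \<notin> \<int>\<^sub>\<le>\<^sub>0"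
  shows "(\<lambda>n. dougall_term A b c d n * (of_nat n * (of_nat n + A)))
           sums (dougall_value A b c d * (b * c * d / (A - (b + c + d))))"
proof -
  interpret shifted: dougall_params "A + 2" "b + 1" "c + 1" "d + 1"
    using Re_pos by (rule shift2)
  have "1 + A \<notin> \<int>\<^sub>\<le>\<^sub>0"
    using add_of_nat_notin_nonpos_Ints[OF A_nonpole, of 1] by (simp add: add.commute)
  note value_shift = dougall_value_shift2[OF this denominators notin_nonpos_Ints_of_Re_pos[OF Re_pos]]
  have e: "1 + (A + 2) - (x + 1) - (y + 1) = 1 + A - x - y" for x y by simp
  have "suminf (dougall_term (A + 2) (b + 1) (c + 1) (d + 1)) = dougall_value (A + 2) (b + 1) (c + 1) (d + 1)"
    by (rule shifted.dougall_sum[unfolded e, OF nonpoles])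
  then have "dougall_term (A + 2) (b + 1) (c + 1) (d + 1) sums dougall_value (A + 2) (b + 1) (c + 1) (d + 1)"
    using shifted.summable_dougall_term by (metis summable_sums)
  then have "(\<lambda>k. dougall_term A b c d (Suc k) * (of_nat (Suc k) * (of_nat (Suc k) + A))) sums
      ((A + 1) * (A + 2) * b * c * d / ((1 + A - b) * (1 + A - c) * (1 + A - d)) *
       dougall_value (A + 2) (b + 1) (c + 1) (d + 1))"
    unfolding dougall_term_index_shift[OF denominators A_neq_0 shifted.A_neq_0] by (rule sums_mult)
  then have sums: "(\<lambda>n. dougall_term A b c d n * (of_nat n * (of_nat n + A))) sums
      ((A + 1) * (A + 2) * b * c * d / ((1 + A - b) * (1 + A - c) * (1 + A - d)) *
       dougall_value (A + 2) (b + 1) (c + 1) (d + 1))"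
    by (subst (asm) sums_Suc_iff) simp
  have regroup: "q * p / U * (D * U / (q * E)) = D * (p / E)"
    if "U \<noteq> 0" "q \<noteq> 0" "E \<noteq> 0" for q p U D E :: complex
    using that by (simp add: field_simps)
  have "(1 + A - b) * (1 + A - c) * (1 + A - d) \<noteq> 0" "(A + 1) * (A + 2) \<noteq> 0" "A - (b + c + d) \<noteq> 0"
    using denominators \<open>1 + A \<notin> \<int>\<^sub>\<le>\<^sub>0\<close> shifted.A_neq_0 Re_pos by (auto simp: add_ac)
  from regroup[OF this, of "b * c * d" "dougall_value A b c d"] sums show ?thesis
    unfolding value_shift by (simp only: mult.assoc times_divide_eq_right)
qed

end

lemma pochhammer_half_shift_quot:
  fixes A :: complex
  assumes "A/2 - 1 \<notin> \<int>\<^sub>\<le>\<^sub>0"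
  shows "pochhammer (A/2 + 2) n / pochhammer (A/2 - 1) n =
           (A + 2 * of_nat n) / A * (1 + 4 / (A^2 - 4) * (of_nat n * (of_nat n + A)))"
proof -
  define x where "x = A/2 - 1"
  define N :: complex where "N = of_nat n"
  have "x + of_nat j \<noteq> 0" for j
    unfolding x_def using assms by (rule add_of_nat_neq_0_of_notin_nonpos_Ints)
  from this[of 0] this[of 1] this[of 2]
  have x: "x \<noteq> 0" "x + 1 \<noteq> 0" "x + 2 \<noteq> 0" by simp_all
  have "pochhammer x n \<noteq> 0"
    unfolding x_def using assms by (rule pochhammer_neq_0_of_notin_nonpos_Ints)
  moreover have "x * (x + 1) * (x + 2) \<noteq> 0" using x by simp
  ultimately have "pochhammer (x + 3) n / pochhammer x n = (x + N) * (x + N + 1) * (x + N + 2) / (x * (x + 1) * (x + 2))"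
    using pochhammer_add_3[of x n] unfolding N_def by (simp add: frac_eq_eq mult.commute)
  moreover have "A/2 + 2 = x + 3" unfolding x_def by simp
  moreover have "(x + N) * (x + N + 1) * (x + N + 2) / (x * (x + 1) * (x + 2)) =
      (A + 2 * N) / A * (1 + 4 / (A^2 - 4) * (N * (N + A)))"
  proof -
    have "A \<noteq> 0" "A - 2 \<noteq> 0" "A + 2 \<noteq> 0"
      using x unfolding x_def by (auto simp: field_simps)
    moreover have "A^2 - 4 = (A - 2) * (A + 2)"
      by (simp add: power2_eq_square algebra_simps)
    ultimately have "A \<noteq> 0" "A^2 - 4 \<noteq> 0"
      by simp_all
    with x show ?thesis
      unfolding x_def by (simp add: field_simps power2_eq_square)
  qed
  ultimately show ?thesis
    unfolding N_def x_def[symmetric] by metis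
qed

context dougall_params
begin

lemma hypergeom_5F4_term_eq:
  assumes "A/2 - 1 \<notin> \<int>\<^sub>\<le>\<^sub>0"
  shows "(\<Prod>a\<leftarrow>[A, A/2 + 2, b, c, d]. pochhammer a n) /
           (\<Prod>b\<leftarrow>[A/2 - 1, 1 + A - b, 1 + A - c, 1 + A - d]. pochhammer b n) * 1 ^ n / of_nat (fact n)
         = dougall_term A b c d n + 4 / (A^2 - 4) * (dougall_term A b c d n * (of_nat n * (of_nat n + A)))"
proof -
  have "pochhammer (A/2 - 1) n \<noteq> 0"
    using assms by (rule pochhammer_neq_0_of_notin_nonpos_Ints)
  moreover have "pochhammer (1 + A - x) n \<noteq> 0" if "1 + A - x \<notin> \<int>\<^sub>\<le>\<^sub>0" for x
    using that by (rule pochhammer_neq_0_of_notin_nonpos_Ints)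
  ultimately have "(\<Prod>a\<leftarrow>[A, A/2 + 2, b, c, d]. pochhammer a n) /
           (\<Prod>b\<leftarrow>[A/2 - 1, 1 + A - b, 1 + A - c, 1 + A - d]. pochhammer b n) * 1 ^ n / of_nat (fact n)
      = wp_term A b c d n * (pochhammer (A/2 + 2) n / pochhammer (A/2 - 1) n)"
    using denominators unfolding wp_term_def by (simp add: field_simps)
  also have "\<dots> = dougall_term A b c d n + 4 / (A^2 - 4) * (dougall_term A b c d n * (of_nat n * (of_nat n + A)))"
    unfolding pochhammer_half_shift_quot[OF assms] dougall_term_def by (simp add: divide_inverse algebra_simps)
  finally show ?thesis .
qed

theorem very_well_poised_5F4_sum:
  assumes "Re (A - (b + c + d)) > 0" and "A/2 - 1 \<notin> \<int>\<^sub>\<le>\<^sub>0"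
    and nonpoles: "1 + A - c - d \<notin> \<int>\<^sub>\<le>\<^sub>0" "1 + A - b - d \<notin> \<int>\<^sub>\<le>\<^sub>0" "1 + A - b - c \<notin> \<int>\<^sub>\<le>\<^sub>0"
  shows "hypergeom [A, A/2 + 2, b, c, d] [A/2 - 1, 1 + A - b, 1 + A - c, 1 + A - d] 1 =
           dougall_value A b c d * (1 + 4 * b * c * d / ((A^2 - 4) * (A - (b + c + d))))"
proof -
  have "dougall_term A b c d sums dougall_value A b c d"
    using summable_dougall_term dougall_sum[OF nonpoles] by (metis summable_sums)
  then have "(\<lambda>n. dougall_term A b c d n + 4 / (A^2 - 4) * (dougall_term A b c d n * (of_nat n * (of_nat n + A))))
      sums (dougall_value A b c d + 4 / (A^2 - 4) * (dougall_value A b c d * (b * c * d / (A - (b + c + d)))))"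
    by (intro sums_add sums_mult sums_dougall_term_quadratic assms nonpoles)
  then have "hypergeom [A, A/2 + 2, b, c, d] [A/2 - 1, 1 + A - b, 1 + A - c, 1 + A - d] 1 =
      dougall_value A b c d + 4 / (A^2 - 4) * (dougall_value A b c d * (b * c * d / (A - (b + c + d))))"
    unfolding hypergeom_def hypergeom_5F4_term_eq[OF assms(2)] by (rule sums_unique[symmetric])
  then show ?thesis by (simp add: algebra_simps)
qed

end

lemma dougall_value_lowered:
  assumes "A - (b + c + d) \<notin> \<int>\<^sub>\<le>\<^sub>0" "A - b - d \<notin> \<int>\<^sub>\<le>\<^sub>0" "A - b - c \<notin> \<int>\<^sub>\<le>\<^sub>0"
  shows "dougall_value A b c d =
    Gamma (1 + A - c) * Gamma (1 + A - d) * Gamma (1 + A - b) * Gamma (A - (b + c + d)) /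
    (Gamma (1 + A) * Gamma (1 + A - c - d) * Gamma (A - b - c) * Gamma (A - b - d)) *
    ((A - (b + c + d)) / ((A - b - c) * (A - b - d)))"
proof -
  have e: "1 + A - (b + c + d) = (A - (b + c + d)) + 1" "1 + A - b - d = (A - b - d) + 1"
    "1 + A - b - c = (A - b - c) + 1" by simp_all
  have regroup: "gb * gc * gd * (E * gE) / (g1 * g_cd * (Q * gQ) * (P * gP))
      = gc * gd * gb * gE / (g1 * g_cd * gP * gQ) * (E / (P * Q))"
    if "P \<noteq> 0" "Q \<noteq> 0" for gb gc gd E gE g1 g_cd Q gQ P gP :: complex
    using that by (simp add: field_simps)
  have "A - b - c \<noteq> 0" "A - b - d \<noteq> 0"
    using assms(2,3) by auto
  then show ?thesis
    unfolding dougall_value_def e Gamma_plus1[OF assms(1)] Gamma_plus1[OF assms(2)] Gamma_plus1[OF assms(3)]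
    by (rule regroup)
qed

lemma reciprocal_k_eq:
  fixes f a1 d1 d2 :: complex
  defines "h \<equiv> (f/2 + 1/2) * (f/2 - 3/2) / a1"
  assumes "a1 \<noteq> 0" "f/2 - 3/2 \<noteq> 0" "f + 1 \<noteq> 0" "f - a1 - d1 - 1 \<noteq> 0" "f - a1 - d2 - 1 \<noteq> 0"
    "f - a1 - d1 - d2 - 1 \<noteq> 0" "d1 * d2 - h * (1 + d1 + d2 + a1 - f) \<noteq> 0"
  shows "(f - a1 - d1 - d2 - 1) / ((f - a1 - d1 - 1) * (f - a1 - d2 - 1)) *
           (1 + 4 * a1 * d1 * d2 / (((f - 1)^2 - 4) * (f - a1 - d1 - d2 - 1)))
         = 1 / (h * (1 + d1 + a1 - f) * (1 + d2 + a1 - f) / (d1 * d2 - h * (1 + d1 + d2 + a1 - f)))"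
proof -
  define H E P Q where "H = (f - 1)^2 - 4" and "E = f - a1 - d1 - d2 - 1"
    and "P = f - a1 - d1 - 1" and "Q = f - a1 - d2 - 1"
  have "H = 2 * (f/2 - 3/2) * (f + 1)"
    unfolding H_def by (simp add: field_simps power2_eq_square)
  with assms(3,4) have "H \<noteq> 0" by simp
  have "h = H / (4 * a1)"
    unfolding h_def H_def by (simp add: field_simps power2_eq_square)
  moreover have "1 + d1 + a1 - f = - P" "1 + d2 + a1 - f = - Q" "1 + d1 + d2 + a1 - f = - E"
    unfolding P_def Q_def E_def by simp_all
  moreover have "E / (P * Q) * (1 + 4 * a1 * d1 * d2 / (H * E))
      = 1 / (H / (4 * a1) * (- P) * (- Q) / (d1 * d2 - H / (4 * a1) * (- E)))"
    if "a1 \<noteq> 0" "H \<noteq> 0" "P \<noteq> 0" "Q \<noteq> 0" "E \<noteq> 0" for a1 H E P Q :: complex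
    using that by (simp add: field_simps)
  ultimately show ?thesis
    using assms(2,5-7) \<open>H \<noteq> 0\<close>
    unfolding H_def[symmetric] E_def[symmetric] P_def[symmetric] Q_def[symmetric]
    by simp
qed

lemma hypergeom_5F4_closed_form:
  fixes f a1 d1 d2 :: complex
  assumes conv: "Re (f - a1 - d1 - d2 - 1) > 0"
    and lower: "f/2 - 3/2 \<notin> \<int>\<^sub>\<le>\<^sub>0" "f - a1 \<notin> \<int>\<^sub>\<le>\<^sub>0" "f - d1 \<notin> \<int>\<^sub>\<le>\<^sub>0" "f - d2 \<notin> \<int>\<^sub>\<le>\<^sub>0"
    and gammas: "f \<notin> \<int>\<^sub>\<le>\<^sub>0" "f - d1 - d2 \<notin> \<int>\<^sub>\<le>\<^sub>0"
      "f - a1 - d1 - 1 \<notin> \<int>\<^sub>\<le>\<^sub>0" "f - a1 - d2 - 1 \<notin> \<int>\<^sub>\<le>\<^sub>0"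
  shows "hypergeom [f - 1, f/2 + 3/2, a1, d1, d2] [f/2 - 3/2, f - a1, f - d1, f - d2] 1 =
    Gamma (f - d1) * Gamma (f - d2) * Gamma (f - a1) * Gamma (f - a1 - d1 - d2 - 1) /
    (Gamma f * Gamma (f - d1 - d2) * Gamma (f - a1 - d1 - 1) * Gamma (f - a1 - d2 - 1)) *
    ((f - a1 - d1 - d2 - 1) / ((f - a1 - d1 - 1) * (f - a1 - d2 - 1)) *
     (1 + 4 * a1 * d1 * d2 / (((f - 1)^2 - 4) * (f - a1 - d1 - d2 - 1))))"
proof -
  have "f - 1 \<notin> \<int>\<^sub>\<le>\<^sub>0"
  proof
    assume "f - 1 \<in> \<int>\<^sub>\<le>\<^sub>0"
    then obtain j where "f = 1 - of_nat j" by (auto elim!: nonpos_Ints_cases' simp: algebra_simps)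
    with lower(1) gammas(1) show False by (cases j) auto
  qed
  interpret dougall_params "f - 1" a1 d1 d2
    by unfold_locales (use \<open>f - 1 \<notin> \<int>\<^sub>\<le>\<^sub>0\<close> conv lower in simp_all)
  have e: "(f - 1)/2 + 2 = f/2 + 3/2" "(f - 1)/2 - 1 = f/2 - 3/2" "1 + (f - 1) - x = f - x"
    "1 + (f - 1) - x - y = f - x - y" "1 + (f - 1) = f" "f - 1 - (a1 + d1 + d2) = f - a1 - d1 - d2 - 1"
    "f - 1 - a1 - x = f - a1 - x - 1" for x y
    by (simp_all add: field_simps)
  have "f - a1 - d2 \<notin> \<int>\<^sub>\<le>\<^sub>0" "f - a1 - d1 \<notin> \<int>\<^sub>\<le>\<^sub>0"
    using gammas(3,4)[THEN add_of_nat_notin_nonpos_Ints, of 1] by simp_all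
  with very_well_poised_5F4_sum[unfolded e] conv lower(1) gammas(2)
  have "hypergeom [f - 1, f/2 + 3/2, a1, d1, d2] [f/2 - 3/2, f - a1, f - d1, f - d2] 1 =
      dougall_value (f - 1) a1 d1 d2 * (1 + 4 * a1 * d1 * d2 / (((f - 1)^2 - 4) * (f - a1 - d1 - d2 - 1)))"
    by simp
  moreover have "f - a1 - d1 - d2 - 1 \<notin> \<int>\<^sub>\<le>\<^sub>0"
    using conv by (rule notin_nonpos_Ints_of_Re_pos)
  with dougall_value_lowered[of "f - 1" a1 d1 d2, unfolded e] gammas(3,4)
  have "dougall_value (f - 1) a1 d1 d2 =
      Gamma (f - d1) * Gamma (f - d2) * Gamma (f - a1) * Gamma (f - a1 - d1 - d2 - 1) /
      (Gamma f * Gamma (f - d1 - d2) * Gamma (f - a1 - d1 - 1) * Gamma (f - a1 - d2 - 1)) *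
      ((f - a1 - d1 - d2 - 1) / ((f - a1 - d1 - 1) * (f - a1 - d2 - 1)))"
    by simp
  ultimately show ?thesis by (simp only: mult.assoc)
qed

theorem mainTheorem12:
  fixes f a1 d1 d2 :: complex
  defines "h \<equiv> (f/2 + 1/2) * (f/2 - 3/2) / a1"
  defines "k \<equiv> h * (1 + d1 + a1 - f) * (1 + d2 + a1 - f) / (d1 * d2 - h * (1 + d1 + d2 + a1 - f))"
  assumes conv: "Re (f - a1 - d1 - d2 - 1) > 0"
    and lower: "f/2 - 3/2 \<notin> \<int>\<^sub>\<le>\<^sub>0" "f - a1 \<notin> \<int>\<^sub>\<le>\<^sub>0" "f - d1 \<notin> \<int>\<^sub>\<le>\<^sub>0" "f - d2 \<notin> \<int>\<^sub>\<le>\<^sub>0"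
    and a1: "a1 \<noteq> 0"
    and den: "d1 * d2 - h * (1 + d1 + d2 + a1 - f) \<noteq> 0"
    and k: "k \<notin> \<int>\<^sub>\<le>\<^sub>0"
    and gammas: "f \<notin> \<int>\<^sub>\<le>\<^sub>0" "f - d1 - d2 \<notin> \<int>\<^sub>\<le>\<^sub>0"
      "f - a1 - d1 - 1 \<notin> \<int>\<^sub>\<le>\<^sub>0" "f - a1 - d2 - 1 \<notin> \<int>\<^sub>\<le>\<^sub>0" "k + 1 \<notin> \<int>\<^sub>\<le>\<^sub>0"
  shows "hypergeom [f - 1, f/2 + 3/2, a1, d1, d2] [f/2 - 3/2, f - a1, f - d1, f - d2] 1 =
    Gamma (f - d1) * Gamma (f - d2) * Gamma (f - a1) * Gamma (f - a1 - d1 - d2 - 1) /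
    (Gamma f * Gamma (f - d1 - d2) * Gamma (f - a1 - d1 - 1) * Gamma (f - a1 - d2 - 1)) *
    (Gamma k / Gamma (k + 1))"
proof -
  have "f + 1 \<noteq> 0"
    using gammas(1) add_of_nat_neq_0_of_notin_nonpos_Ints[of f 1] by simp
  moreover have "f - a1 - d1 - d2 - 1 \<notin> \<int>\<^sub>\<le>\<^sub>0"
    using conv by (rule notin_nonpos_Ints_of_Re_pos)
  ultimately have "(f - a1 - d1 - d2 - 1) / ((f - a1 - d1 - 1) * (f - a1 - d2 - 1)) *
      (1 + 4 * a1 * d1 * d2 / (((f - 1)^2 - 4) * (f - a1 - d1 - d2 - 1))) = 1 / k"
    using a1 den lower(1) gammas(3,4) unfolding k_def h_def by (intro reciprocal_k_eq) auto
  moreover have "Gamma k / Gamma (k + 1) = 1 / k"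
    using Gamma_plus1[OF k] k by (auto simp: Gamma_eq_zero_iff)
  ultimately show ?thesis
    using hypergeom_5F4_closed_form[OF conv lower gammas(1-4)] by simp
qed

end
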